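(* Consider the operational scenario of a multi-task model with three tasks and binary labels $y\in\{\pm1\}$ (preparations $\mathbf{S}_{\vec{x}}$, $\vec{x}\in D$; effects $\mathbf{E}^k_{\pm}$, $k=1,2,3$, together with $\Omega$ and $\emptyset$). Suppose the effect densities satisfy the operational equivalence $$\tfrac13\mathbf{E}^1_{+}+\tfrac13\mathbf{E}^2_{+}+\tfrac13\mathbf{E}^3_{+}\ \sim\ \tfrac13\mathbf{E}^1_{-}+\tfrac13\mathbf{E}^2_{-}+\tfrac13\mathbf{E}^3_{-},$$ and that $s_1,\dots,s_6$ are preparation densities satisfying $$\tfrac12 s_1+\tfrac12 s_2\ \sim\ \tfrac12 s_3+\tfrac12 s_4\ \sim\ \tfrac12 s_5+\tfrac12 s_6.$$ If the multi-task model is noncontextual, then $$P(\mathbf{E}^1_+\mid s_1)+P(\mathbf{E}^2_+\mid s_3)+P(\mathbf{E}^3_+\mid s_5)\le\tfrac52.$$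
   Context: A multi-task model is a family of conditional distributions $\mathcal{P}^k(y\mid\vec{x})$, $k=1,2,3$, $y\in\{\pm1\}$, $\vec{x}\in D$. Its operational scenario has preparations $\mathbf{S}_{\vec{x}}$, effects $\mathbf{E}^k_y$, trivial effect $\Omega$ and null effect $\emptyset$, with statistics $P(\mathbf{E}^k_y\mid\mathbf{S}_{\vec{x}})=\mathcal{P}^k(y\mid\vec{x})$, $P(\Omega\mid\mathbf{S})=1$, $P(\emptyset\mid\mathbf{S})=0$. Preparation (resp. effect) densities are finite convex combinations of preparations (resp. effects), with statistics extended bilinearly. Two preparation densities are operationally equivalent ($\sim$) iff they give equal probabilities for all effects; two effect densities are operationally equivalent iff they give equal probabilities for all preparations. An ontological model consists of a measure space $\Lambda$, a probability density $\mu_{\mathbf{S}}$ on $\Lambda$ for each preparation and a response function $\xi_{\mathbf{E}}:\Lambda\to[0,1]$ for each effect, with $\xi_\Omega\equiv1$, $\xi_\emptyset\equiv0$, extended linearly to densities, such that $P(\mathbf{E}\mid\mathbf{S})=\int_\Lambda\mu_{\mathbf{S}}(\lambda)\xi_{\mathbf{E}}(\lambda)d\lambda$. It is noncontextual if operationally equivalent preparation densities have identical $\mu$ and operationally equivalent effect densities have identical $\xi$. The multi-task model is noncontextual iff its operational scenario admits a noncontextual ontological model. *)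

theory Defs
  imports "HOL-Analysis.Analysis"
begin

text \<open>Effects of the operational scenario: Eff k y is E^k_y (task k in {1,2,3},
label y in {1,-1}), Omega is the trivial effect, Null the null effect.\<close>
datatype eff = Eff nat int | Omega | Null

definition valid_eff :: "eff \<Rightarrow> bool" where
  "valid_eff e \<longleftrightarrow> (\<exists>k y. e = Eff k y \<and> k \<in> {1,2,3} \<and> y \<in> {1,-1}) \<or> e = Omega \<or> e = Null"

definition multitask_model :: "'x set \<Rightarrow> (nat \<Rightarrow> int \<Rightarrow> 'x \<Rightarrow> real) \<Rightarrow> bool" where
  "multitask_model D P \<longleftrightarrow>
     (\<forall>k\<in>{1,2,3}. \<forall>x\<in>D. P k 1 x \<ge> 0 \<and> P k (-1) x \<ge> 0 \<and> P k 1 x + P k (-1) x = 1)"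

fun stat :: "(nat \<Rightarrow> int \<Rightarrow> 'x \<Rightarrow> real) \<Rightarrow> eff \<Rightarrow> 'x \<Rightarrow> real" where
  "stat P (Eff k y) x = P k y x"
| "stat P Omega x = 1"
| "stat P Null x = 0"

definition supp :: "('a \<Rightarrow> real) \<Rightarrow> 'a set" where
  "supp d = {a. d a \<noteq> 0}"

definition density :: "'a set \<Rightarrow> ('a \<Rightarrow> real) \<Rightarrow> bool" where
  "density A d \<longleftrightarrow> finite (supp d) \<and> supp d \<subseteq> A \<and> (\<forall>a. d a \<ge> 0) \<and> sum d (supp d) = 1"

definition prep_density :: "'x set \<Rightarrow> ('x \<Rightarrow> real) \<Rightarrow> bool" where
  "prep_density D s \<longleftrightarrow> density D s"

definition eff_density :: "(eff \<Rightarrow> real) \<Rightarrow> bool" where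
  "eff_density ed \<longleftrightarrow> density {e. valid_eff e} ed"

text \<open>Point mass (a pure preparation / effect seen as a density).\<close>
definition pt :: "'a \<Rightarrow> 'a \<Rightarrow> real" where
  "pt a = (\<lambda>b. if b = a then 1 else 0)"

definition prob :: "(nat \<Rightarrow> int \<Rightarrow> 'x \<Rightarrow> real) \<Rightarrow> (eff \<Rightarrow> real) \<Rightarrow> ('x \<Rightarrow> real) \<Rightarrow> real" where
  "prob P ed s = (\<Sum>e\<in>supp ed. \<Sum>x\<in>supp s. ed e * s x * stat P e x)"

definition prep_equiv :: "(nat \<Rightarrow> int \<Rightarrow> 'x \<Rightarrow> real) \<Rightarrow> ('x \<Rightarrow> real) \<Rightarrow> ('x \<Rightarrow> real) \<Rightarrow> bool" where
  "prep_equiv P s s' \<longleftrightarrow> (\<forall>e. valid_eff e \<longrightarrow> prob P (pt e) s = prob P (pt e) s')"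

definition eff_equiv :: "'x set \<Rightarrow> (nat \<Rightarrow> int \<Rightarrow> 'x \<Rightarrow> real) \<Rightarrow> (eff \<Rightarrow> real) \<Rightarrow> (eff \<Rightarrow> real) \<Rightarrow> bool" where
  "eff_equiv D P ed ed' \<longleftrightarrow> (\<forall>x\<in>D. prob P ed (pt x) = prob P ed' (pt x))"

text \<open>Ontological model on the measure space M (Lambda = space M): densities mu x for the
preparations S_x, response functions xi e for the effects.\<close>
definition ont_model :: "'x set \<Rightarrow> (nat \<Rightarrow> int \<Rightarrow> 'x \<Rightarrow> real) \<Rightarrow> 'l measure
    \<Rightarrow> ('x \<Rightarrow> 'l \<Rightarrow> real) \<Rightarrow> (eff \<Rightarrow> 'l \<Rightarrow> real) \<Rightarrow> bool" where
  "ont_model D P M mu xi \<longleftrightarrow>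
     (\<forall>x\<in>D. mu x \<in> borel_measurable M \<and> (\<forall>l\<in>space M. mu x l \<ge> 0)
            \<and> integrable M (mu x) \<and> integral\<^sup>L M (mu x) = 1)
   \<and> (\<forall>e. valid_eff e \<longrightarrow> xi e \<in> borel_measurable M \<and> (\<forall>l\<in>space M. 0 \<le> xi e l \<and> xi e l \<le> 1))
   \<and> (\<forall>l\<in>space M. xi Omega l = 1) \<and> (\<forall>l\<in>space M. xi Null l = 0)
   \<and> (\<forall>e x. valid_eff e \<and> x \<in> D \<longrightarrow>
        integrable M (\<lambda>l. mu x l * xi e l) \<and> stat P e x = (\<integral>l. mu x l * xi e l \<partial>M))"

definition mu_dens :: "('x \<Rightarrow> 'l \<Rightarrow> real) \<Rightarrow> ('x \<Rightarrow> real) \<Rightarrow> 'l \<Rightarrow> real" where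
  "mu_dens mu s = (\<lambda>l. \<Sum>x\<in>supp s. s x * mu x l)"

definition xi_dens :: "(eff \<Rightarrow> 'l \<Rightarrow> real) \<Rightarrow> (eff \<Rightarrow> real) \<Rightarrow> 'l \<Rightarrow> real" where
  "xi_dens xi ed = (\<lambda>l. \<Sum>e\<in>supp ed. ed e * xi e l)"

definition noncontextual_model :: "'x set \<Rightarrow> (nat \<Rightarrow> int \<Rightarrow> 'x \<Rightarrow> real) \<Rightarrow> 'l measure
    \<Rightarrow> ('x \<Rightarrow> 'l \<Rightarrow> real) \<Rightarrow> (eff \<Rightarrow> 'l \<Rightarrow> real) \<Rightarrow> bool" where
  "noncontextual_model D P M mu xi \<longleftrightarrow> ont_model D P M mu xi
   \<and> (\<forall>s s'. prep_density D s \<and> prep_density D s' \<and> prep_equiv P s s' \<longrightarrow>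
        (\<forall>l\<in>space M. mu_dens mu s l = mu_dens mu s' l))
   \<and> (\<forall>ed ed'. eff_density ed \<and> eff_density ed' \<and> eff_equiv D P ed ed' \<longrightarrow>
        (\<forall>l\<in>space M. xi_dens xi ed l = xi_dens xi ed' l))"

definition mix2 :: "('x \<Rightarrow> real) \<Rightarrow> ('x \<Rightarrow> real) \<Rightarrow> 'x \<Rightarrow> real" where
  "mix2 a b = (\<lambda>x. a x / 2 + b x / 2)"

definition avg_eff :: "int \<Rightarrow> eff \<Rightarrow> real" where
  "avg_eff y = (\<lambda>e. if e \<in> {Eff 1 y, Eff 2 y, Eff 3 y} then 1/3 else 0)"

end

theory Submission
  imports Defs
begin

text \<open>Noncontextuality turns operational equivalences into pointwise identities on the
ontic space. Since \<open>1/2 E\<^sup>k\<^sub>+ + 1/2 E\<^sup>k\<^sub>- \<sim> 1/2 \<Omega> + 1/2 \<emptyset>\<close>, the response functions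
satisfy \<open>\<xi>(E\<^sup>k\<^sub>+) + \<xi>(E\<^sup>k\<^sub>-) = 1\<close>, and with the assumed effect equivalence
\<open>\<xi>\<^sub>1 + \<xi>\<^sub>2 + \<xi>\<^sub>3 = 3/2\<close> for \<open>\<xi>\<^sub>k = \<xi>(E\<^sup>k\<^sub>+)\<close>. The preparation equivalences give
\<open>\<mu>\<^sub>1 + \<mu>\<^sub>2 = \<mu>\<^sub>3 + \<mu>\<^sub>4 = \<mu>\<^sub>5 + \<mu>\<^sub>6 = n\<close> for the ontic densities \<open>\<mu>\<^sub>i\<close> of the \<open>s\<^sub>i\<close>. As each
\<open>\<mu>\<^sub>i \<le> n\<close>, we have \<open>\<mu>\<^sub>i \<xi> \<le> \<mu>\<^sub>i/2 + n (\<xi> - 1/2)\<^sup>+\<close>, and the positive parts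
\<open>(\<xi>\<^sub>k - 1/2)\<^sup>+\<close> of three numbers in [0,1] summing to 3/2 add up to at most 1/2. Hence
\<open>\<mu>\<^sub>1\<xi>\<^sub>1 + \<mu>\<^sub>3\<xi>\<^sub>2 + \<mu>\<^sub>5\<xi>\<^sub>3 \<le> (\<mu>\<^sub>1 + \<mu>\<^sub>3 + \<mu>\<^sub>5)/2 + n/2\<close>, which integrates to 3/2 + 1.\<close>

lemma supp_pt [simp]: "supp (pt a) = {a}"
  unfolding supp_def pt_def by auto

lemma pt_self [simp]: "pt a a = 1"
  by (simp add: pt_def)

lemma supp_mix2_subset: "supp (mix2 a b) \<subseteq> supp a \<union> supp b"
  unfolding supp_def mix2_def by auto

lemma sum_supp_eq_sum_superset:
  assumes "finite A" "supp d \<subseteq> A"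
  shows "(\<Sum>x\<in>supp d. d x * f x) = (\<Sum>x\<in>A. d x * f x)"
  by (rule sum.mono_neutral_left) (use assms in \<open>auto simp: supp_def\<close>)

lemma sum_supp_pt [simp]: "(\<Sum>x\<in>supp (pt a). pt a x * f x) = f a"
  unfolding supp_pt by (simp add: pt_def)

lemma sum_supp_mix2:
  assumes "finite (supp a)" "finite (supp b)"
  shows "(\<Sum>x\<in>supp (mix2 a b). mix2 a b x * f x)
    = (\<Sum>x\<in>supp a. a x * f x) / 2 + (\<Sum>x\<in>supp b. b x * f x) / 2"
proof -
  let ?U = "supp a \<union> supp b"
  have U: "finite ?U" using assms by simp
  have "(\<Sum>x\<in>supp (mix2 a b). mix2 a b x * f x) = (\<Sum>x\<in>?U. mix2 a b x * f x)"
    by (rule sum_supp_eq_sum_superset[OF U supp_mix2_subset])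
  also have "\<dots> = (\<Sum>x\<in>?U. a x * f x) / 2 + (\<Sum>x\<in>?U. b x * f x) / 2"
    by (simp add: mix2_def sum_divide_distrib sum.distrib[symmetric] algebra_simps)
  also have "\<dots> = (\<Sum>x\<in>supp a. a x * f x) / 2 + (\<Sum>x\<in>supp b. b x * f x) / 2"
    using sum_supp_eq_sum_superset[OF U] by simp
  finally show ?thesis .
qed

lemma density_pt: "a \<in> A \<Longrightarrow> density A (pt a)"
  unfolding density_def supp_pt by (simp add: pt_def)

lemma density_mix2:
  assumes "density A a" "density A b"
  shows "density A (mix2 a b)"
proof -
  have fin: "finite (supp a)" "finite (supp b)"
    using assms unfolding density_def by auto
  have "sum (mix2 a b) (supp (mix2 a b)) = sum a (supp a) / 2 + sum b (supp b) / 2"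
    using sum_supp_mix2[OF fin, where f = "\<lambda>_. 1"] by simp
  then show ?thesis
    using assms supp_mix2_subset[of a b] finite_subset[OF supp_mix2_subset] fin
    unfolding density_def by (auto simp: mix2_def)
qed

lemma prob_pt_left: "prob P (pt e) s = (\<Sum>x\<in>supp s. s x * stat P e x)"
  unfolding prob_def supp_pt by (simp add: pt_def)

lemma prob_pt_right: "prob P ed (pt x) = (\<Sum>e\<in>supp ed. ed e * stat P e x)"
  unfolding prob_def supp_pt by (simp add: pt_def)

lemma valid_eff_simps [simp]:
  "valid_eff Omega" "valid_eff Null"
  "k \<in> {1, 2, 3} \<Longrightarrow> y \<in> {1, -1} \<Longrightarrow> valid_eff (Eff k y)"
  unfolding valid_eff_def by auto

lemma supp_avg_eff: "supp (avg_eff y) = {Eff 1 y, Eff 2 y, Eff 3 y}"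
  unfolding supp_def avg_eff_def by auto

lemma eff_density_avg_eff: "y \<in> {1, -1} \<Longrightarrow> eff_density (avg_eff y)"
  unfolding eff_density_def density_def supp_avg_eff by (auto simp: avg_eff_def)

lemma xi_dens_avg_eff:
  "xi_dens xi (avg_eff y) l = (xi (Eff 1 y) l + xi (Eff 2 y) l + xi (Eff 3 y) l) / 3"
  unfolding xi_dens_def supp_avg_eff by (simp add: avg_eff_def)

lemma xi_dens_mix2_pt:
  "xi_dens xi (mix2 (pt a) (pt b)) l = (xi a l + xi b l) / 2"
  unfolding xi_dens_def by (simp add: sum_supp_mix2)

lemma noncontextual_xi_Eff_complement:
  assumes "multitask_model D P" "noncontextual_model D P M mu xi"
    and "k \<in> {1, 2, 3}" "l \<in> space M"
  shows "xi (Eff k 1) l + xi (Eff k (-1)) l = 1"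
proof -
  let ?ed = "mix2 (pt (Eff k 1)) (pt (Eff k (-1)))"
  let ?ed' = "mix2 (pt Omega) (pt Null)"
  have "eff_density ?ed" "eff_density ?ed'"
    using \<open>k \<in> {1, 2, 3}\<close> unfolding eff_density_def by (auto intro!: density_mix2 density_pt)
  moreover have "eff_equiv D P ?ed ?ed'"
    using assms(1,3) unfolding eff_equiv_def prob_pt_right multitask_model_def
    by (auto simp: sum_supp_mix2)
  ultimately have "xi_dens xi ?ed l = xi_dens xi ?ed' l"
    using assms(2,4) unfolding noncontextual_model_def by blast
  moreover have "xi Omega l = 1" "xi Null l = 0"
    using assms(2,4) unfolding noncontextual_model_def ont_model_def by auto
  ultimately show ?thesis by (simp add: xi_dens_mix2_pt)
qed

lemma noncontextual_xi_Eff_sum: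
  assumes "multitask_model D P" "noncontextual_model D P M mu xi"
    and "eff_equiv D P (avg_eff 1) (avg_eff (-1))" "l \<in> space M"
  shows "xi (Eff 1 1) l + xi (Eff 2 1) l + xi (Eff 3 1) l = 3 / 2"
proof -
  have "xi_dens xi (avg_eff 1) l = xi_dens xi (avg_eff (-1)) l"
    using assms(2-4) eff_density_avg_eff unfolding noncontextual_model_def by simp
  moreover have "\<forall>k\<in>{1, 2, 3}. xi (Eff k 1) l + xi (Eff k (-1)) l = 1"
    using noncontextual_xi_Eff_complement[OF assms(1,2) _ assms(4)] by blast
  ultimately show ?thesis
    unfolding xi_dens_avg_eff by simp
qed

lemma mu_dens_mix2:
  "finite (supp a) \<Longrightarrow> finite (supp b) \<Longrightarrow>
    mu_dens mu (mix2 a b) l = (mu_dens mu a l + mu_dens mu b l) / 2"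
  unfolding mu_dens_def by (simp add: sum_supp_mix2 add_divide_distrib)

lemma noncontextual_mu_dens_mix2_eq:
  assumes "noncontextual_model D P M mu xi"
    and "prep_density D a" "prep_density D b" "prep_density D c" "prep_density D d"
    and "prep_equiv P (mix2 a b) (mix2 c d)" "l \<in> space M"
  shows "mu_dens mu a l + mu_dens mu b l = mu_dens mu c l + mu_dens mu d l"
proof -
  have "prep_density D (mix2 a b)" "prep_density D (mix2 c d)"
    using assms(2-5) unfolding prep_density_def by (simp_all add: density_mix2)
  then have "mu_dens mu (mix2 a b) l = mu_dens mu (mix2 c d) l"
    using assms(1,6,7) unfolding noncontextual_model_def by blast
  moreover have "finite (supp s)" if "prep_density D s" for s
    using that unfolding prep_density_def density_def by blast
  ultimately show ?thesis
    using assms(2-5) by (simp add: mu_dens_mix2)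
qed

lemma ont_model_mu_dens_nonneg:
  assumes "ont_model D P M mu xi" "prep_density D s" "l \<in> space M"
  shows "0 \<le> mu_dens mu s l"
  using assms unfolding ont_model_def prep_density_def density_def mu_dens_def
  by (auto intro!: sum_nonneg)

lemma ont_model_has_integral_mu_dens:
  assumes "ont_model D P M mu xi" "prep_density D s"
  shows "has_bochner_integral M (mu_dens mu s) 1"
proof -
  have "has_bochner_integral M (\<lambda>l. \<Sum>x\<in>supp s. s x * mu x l) (\<Sum>x\<in>supp s. s x * 1)"
    using assms unfolding ont_model_def prep_density_def density_def
    by (intro has_bochner_integral_sum has_bochner_integral_mult_right)
      (auto simp: has_bochner_integral_iff)
  then show ?thesis
    using assms(2) unfolding mu_dens_def prep_density_def density_def by simp
qed

lemma ont_model_has_integral_prob: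
  assumes "ont_model D P M mu xi" "prep_density D s" "valid_eff e"
  shows "has_bochner_integral M (\<lambda>l. mu_dens mu s l * xi e l) (prob P (pt e) s)"
proof -
  have "has_bochner_integral M (\<lambda>l. \<Sum>x\<in>supp s. s x * (mu x l * xi e l))
      (\<Sum>x\<in>supp s. s x * stat P e x)"
    using assms unfolding ont_model_def prep_density_def density_def
    by (intro has_bochner_integral_sum has_bochner_integral_mult_right)
      (auto simp: has_bochner_integral_iff)
  then show ?thesis
    unfolding mu_dens_def prob_pt_left by (simp add: sum_distrib_right mult.assoc)
qed

lemma mult_le_half_plus_excess:
  fixes m n x :: real
  assumes "0 \<le> m" "m \<le> n"
  shows "m * x \<le> m / 2 + n * max (x - 1/2) 0"
proof (cases "x \<ge> 1/2")
  case True
  then have "m * (x - 1/2) \<le> n * (x - 1/2)" using assms by (intro mult_right_mono) auto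
  then show ?thesis using True by (simp add: algebra_simps)
next
  case False
  then have "m * (x - 1/2) \<le> 0" using assms by (simp add: mult_nonneg_nonpos)
  then show ?thesis using False by (simp add: algebra_simps)
qed

lemma balanced_response_le:
  fixes m1 m2 m3 m4 m5 m6 a b c :: real
  assumes "0 \<le> m1" "0 \<le> m2" "0 \<le> m3" "0 \<le> m4" "0 \<le> m5" "0 \<le> m6"
    and "m1 + m2 = m3 + m4" "m3 + m4 = m5 + m6"
    and "0 \<le> a" "a \<le> 1" "0 \<le> b" "b \<le> 1" "0 \<le> c" "c \<le> 1" "a + b + c = 3/2"
  shows "m1 * a + m3 * b + m5 * c \<le> (m1 + m3 + m5) / 2 + (m1 + m2) / 2"
proof -
  define n where "n = m1 + m2"
  define excess where "excess = max (a - 1/2) 0 + max (b - 1/2) 0 + max (c - 1/2) (0::real)"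
  have "excess \<le> 1/2"
    using assms(9-15) unfolding excess_def by (simp add: max_def)
  have "m1 * a + m3 * b + m5 * c \<le> (m1 + m3 + m5) / 2 + n * excess"
    using mult_le_half_plus_excess[of m1 n a] mult_le_half_plus_excess[of m3 n b]
      mult_le_half_plus_excess[of m5 n c] assms(1-8)
    unfolding n_def excess_def by (simp add: distrib_left add_divide_distrib)
  also have "\<dots> \<le> (m1 + m3 + m5) / 2 + n / 2"
    using \<open>excess \<le> 1/2\<close> assms(1,2) unfolding n_def
    by (simp add: mult_left_mono[of _ "1/2" "m1 + m2", simplified])
  finally show ?thesis
    unfolding n_def .
qed

lemma balanced_response_integral_le:
  fixes f1 f2 f3 f4 f5 f6 g1 g2 g3 :: "'l \<Rightarrow> real"
  assumes "has_bochner_integral M f1 1" "has_bochner_integral M f2 1"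
    and "has_bochner_integral M f3 1" "has_bochner_integral M f5 1"
    and "has_bochner_integral M (\<lambda>l. f1 l * g1 l) p1"
    and "has_bochner_integral M (\<lambda>l. f3 l * g2 l) p2"
    and "has_bochner_integral M (\<lambda>l. f5 l * g3 l) p3"
    and "\<And>l. l \<in> space M \<Longrightarrow> 0 \<le> f1 l \<and> 0 \<le> f2 l \<and> 0 \<le> f3 l \<and> 0 \<le> f4 l \<and> 0 \<le> f5 l \<and> 0 \<le> f6 l"
    and "\<And>l. l \<in> space M \<Longrightarrow> f1 l + f2 l = f3 l + f4 l \<and> f3 l + f4 l = f5 l + f6 l"
    and "\<And>l. l \<in> space M \<Longrightarrow> 0 \<le> g1 l \<and> g1 l \<le> 1 \<and> 0 \<le> g2 l \<and> g2 l \<le> 1 \<and> 0 \<le> g3 l \<and> g3 l \<le> 1"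
    and "\<And>l. l \<in> space M \<Longrightarrow> g1 l + g2 l + g3 l = 3/2"
  shows "p1 + p2 + p3 \<le> 5/2"
proof -
  let ?lhs = "\<lambda>l. f1 l * g1 l + f3 l * g2 l + f5 l * g3 l"
  let ?rhs = "\<lambda>l. (f1 l + f3 l + f5 l) / 2 + (f1 l + f2 l) / 2"
  have lhs: "has_bochner_integral M ?lhs (p1 + p2 + p3)"
    using assms(5-7) by (intro has_bochner_integral_add)
  have rhs: "has_bochner_integral M ?rhs ((1 + 1 + 1) / 2 + (1 + 1) / 2)"
    using assms(1-4) by (intro has_bochner_integral_add has_bochner_integral_divide_zero)
  have "?lhs l \<le> ?rhs l" if l: "l \<in> space M" for l
    by (rule balanced_response_le[where ?m4.0 = "f4 l" and ?m6.0 = "f6 l"])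
      (use assms(8)[OF l] assms(9)[OF l] assms(10)[OF l] assms(11)[OF l] in auto)
  then have "integral\<^sup>L M ?lhs \<le> integral\<^sup>L M ?rhs"
    using lhs rhs by (intro integral_mono) (auto simp: has_bochner_integral_iff)
  then show ?thesis
    using lhs rhs by (simp add: has_bochner_integral_iff)
qed

lemma ont_model_prob_sum_le:
  assumes ont: "ont_model D P M mu xi"
    and "prep_density D s1" "prep_density D s2" "prep_density D s3"
    and "prep_density D s4" "prep_density D s5" "prep_density D s6"
    and balanced: "\<And>l. l \<in> space M \<Longrightarrow>
      mu_dens mu s1 l + mu_dens mu s2 l = mu_dens mu s3 l + mu_dens mu s4 l \<and>
      mu_dens mu s3 l + mu_dens mu s4 l = mu_dens mu s5 l + mu_dens mu s6 l"
    and xi_sum: "\<And>l. l \<in> space M \<Longrightarrow> xi (Eff 1 1) l + xi (Eff 2 1) l + xi (Eff 3 1) l = 3/2"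
  shows "prob P (pt (Eff 1 1)) s1 + prob P (pt (Eff 2 1)) s3 + prob P (pt (Eff 3 1)) s5 \<le> 5/2"
proof (rule balanced_response_integral_le
    [where ?f2.0 = "mu_dens mu s2" and ?f4.0 = "mu_dens mu s4" and ?f6.0 = "mu_dens mu s6"])
  show "has_bochner_integral M (mu_dens mu s1) 1" "has_bochner_integral M (mu_dens mu s2) 1"
    "has_bochner_integral M (mu_dens mu s3) 1" "has_bochner_integral M (mu_dens mu s5) 1"
    using assms(2-4,6) by (simp_all add: ont_model_has_integral_mu_dens[OF ont])
  show "has_bochner_integral M (\<lambda>l. mu_dens mu s1 l * xi (Eff 1 1) l) (prob P (pt (Eff 1 1)) s1)"
    "has_bochner_integral M (\<lambda>l. mu_dens mu s3 l * xi (Eff 2 1) l) (prob P (pt (Eff 2 1)) s3)"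
    "has_bochner_integral M (\<lambda>l. mu_dens mu s5 l * xi (Eff 3 1) l) (prob P (pt (Eff 3 1)) s5)"
    using assms(2,4,6) by (simp_all add: ont_model_has_integral_prob[OF ont])
  fix l assume l: "l \<in> space M"
  show "0 \<le> mu_dens mu s1 l \<and> 0 \<le> mu_dens mu s2 l \<and> 0 \<le> mu_dens mu s3 l \<and>
      0 \<le> mu_dens mu s4 l \<and> 0 \<le> mu_dens mu s5 l \<and> 0 \<le> mu_dens mu s6 l"
    using assms(2-7) l by (simp add: ont_model_mu_dens_nonneg[OF ont])
  have "0 \<le> xi e l \<and> xi e l \<le> 1" if "valid_eff e" for e
    using ont that l unfolding ont_model_def by blast
  then show "0 \<le> xi (Eff 1 1) l \<and> xi (Eff 1 1) l \<le> 1 \<and> 0 \<le> xi (Eff 2 1) l \<and>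
      xi (Eff 2 1) l \<le> 1 \<and> 0 \<le> xi (Eff 3 1) l \<and> xi (Eff 3 1) l \<le> 1"
    by simp
qed (use balanced xi_sum in blast)+

theorem lemma1:
  fixes D :: "'x set" and P :: "nat \<Rightarrow> int \<Rightarrow> 'x \<Rightarrow> real"
    and M :: "'l measure" and mu :: "'x \<Rightarrow> 'l \<Rightarrow> real" and xi :: "eff \<Rightarrow> 'l \<Rightarrow> real"
    and s1 s2 s3 s4 s5 s6 :: "'x \<Rightarrow> real"
  assumes "multitask_model D P"
    and "noncontextual_model D P M mu xi"
    and "eff_equiv D P (avg_eff 1) (avg_eff (-1))"
    and "prep_density D s1" "prep_density D s2" "prep_density D s3"
    and "prep_density D s4" "prep_density D s5" "prep_density D s6"
    and "prep_equiv P (mix2 s1 s2) (mix2 s3 s4)"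
    and "prep_equiv P (mix2 s3 s4) (mix2 s5 s6)"
  shows "prob P (pt (Eff 1 1)) s1 + prob P (pt (Eff 2 1)) s3 + prob P (pt (Eff 3 1)) s5 \<le> 5/2"
proof (rule ont_model_prob_sum_le)
  show "ont_model D P M mu xi"
    using assms(2) unfolding noncontextual_model_def by blast
  fix l assume l: "l \<in> space M"
  show "mu_dens mu s1 l + mu_dens mu s2 l = mu_dens mu s3 l + mu_dens mu s4 l \<and>
      mu_dens mu s3 l + mu_dens mu s4 l = mu_dens mu s5 l + mu_dens mu s6 l"
    using noncontextual_mu_dens_mix2_eq[OF assms(2,4-7,10) l]
      noncontextual_mu_dens_mix2_eq[OF assms(2,6-9,11) l] by blast
  show "xi (Eff 1 1) l + xi (Eff 2 1) l + xi (Eff 3 1) l = 3/2"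
    using noncontextual_xi_Eff_sum[OF assms(1-3) l] .
qed (use assms in blast)+

end
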